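(* The reductions $\to_{ym}$, $\to_{yeAY}$ and $\to_{yeYN}$ are deterministic, and $\to_{ygcv}$ is diamond.
   Context: Terms: $t ::= x \mid \lambda x.t \mid t\,u \mid t[x\backslash u]$ ($t[x\backslash u]$ an explicit substitution binding $x$ in $t$; terms up to $\alpha$). Values $v ::= \lambda x.t$. Substitution contexts $S ::= \langle\cdot\rangle\mid S[x\backslash u]$. For a class of contexts $K$, $K\langle\langle t\rangle\rangle$ is plugging without capture of free variables of $t$. Root rules: $S\langle\lambda x.t\rangle u\mapsto_m S\langle t[x\backslash u]\rangle$; $K\langle\langle x\rangle\rangle[x\backslash u]\mapsto_{e_K} K\langle\langle u\rangle\rangle[x\backslash u]$ ($K$ ranging over the class of contexts); $t[x\backslash S\langle v\rangle]\mapsto_{gcv} S\langle t\rangle$ if $x\notin\mathrm{fv}(t)$. Answers $a ::= v\mid a[x\backslash a']$; name contexts $N ::= \langle\cdot\rangle\mid N t\mid N[x\backslash t]$; auxiliary contexts $A ::= \langle\cdot\rangle\mid a[x\backslash A]\mid A[x\backslash t]$; silly contexts $Y ::= A\langle N\rangle$. $\to_{ym} := Y\langle\mapsto_m\rangle$; $\to_{yeAY} := A\langle\mapsto_{e_Y}\rangle$; $\to_{yeYN} := Y\langle\mapsto_{e_N}\rangle$; $\to_{ygcv}:=Y\langle\mapsto_{gcv}\rangle$. Deterministic: each term has at most one reduct. Diamond: if $u_1\leftarrow t\to u_2$ then $u_1=u_2$ or there is $s$ with $u_1\to s\leftarrow u_2$. *)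

theory Defs
  imports Main
begin

text \<open>Terms up to alpha-equivalence, represented with de Bruijn indices.
  Lam t binds index 0 in t; ESub t u is the explicit substitution t[x\u],
  binding index 0 in t (not in u).\<close>

datatype trm = Var nat | Lam trm | App trm trm | ESub trm trm

fun lift :: "nat \<Rightarrow> nat \<Rightarrow> trm \<Rightarrow> trm" where
  "lift k c (Var i) = (if i < c then Var i else Var (i + k))"
| "lift k c (Lam t) = Lam (lift k (Suc c) t)"
| "lift k c (App t u) = App (lift k c t) (lift k c u)"
| "lift k c (ESub t u) = ESub (lift k (Suc c) t) (lift k c u)"

text \<open>Removing a binder whose variable (index c) does not occur: indices > c go down by one.\<close>
fun lower :: "nat \<Rightarrow> trm \<Rightarrow> trm" where
  "lower c (Var i) = (if i < c then Var i else Var (i - 1))"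
| "lower c (Lam t) = Lam (lower (Suc c) t)"
| "lower c (App t u) = App (lower c t) (lower c u)"
| "lower c (ESub t u) = ESub (lower (Suc c) t) (lower c u)"

fun occ :: "nat \<Rightarrow> trm \<Rightarrow> bool" where
  "occ k (Var i) = (i = k)"
| "occ k (Lam t) = occ (Suc k) t"
| "occ k (App t u) = (occ k t \<or> occ k u)"
| "occ k (ESub t u) = (occ (Suc k) t \<or> occ k u)"

fun is_val :: "trm \<Rightarrow> bool" where
  "is_val (Lam t) = True"
| "is_val _ = False"

inductive is_ans :: "trm \<Rightarrow> bool" where
  "is_val v \<Longrightarrow> is_ans v"
| "is_ans a \<Longrightarrow> is_ans a' \<Longrightarrow> is_ans (ESub a a')"

datatype ctx = Hole | AppL ctx trm | AppR trm ctx | LamC ctx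
  | SubL ctx trm | SubR trm ctx

fun plug :: "ctx \<Rightarrow> trm \<Rightarrow> trm" where
  "plug Hole t = t"
| "plug (AppL C u) t = App (plug C t) u"
| "plug (AppR u C) t = App u (plug C t)"
| "plug (LamC C) t = Lam (plug C t)"
| "plug (SubL C u) t = ESub (plug C t) u"
| "plug (SubR u C) t = ESub u (plug C t)"

fun depth :: "ctx \<Rightarrow> nat" where
  "depth Hole = 0"
| "depth (AppL C u) = depth C"
| "depth (AppR u C) = depth C"
| "depth (LamC C) = Suc (depth C)"
| "depth (SubL C u) = Suc (depth C)"
| "depth (SubR u C) = depth C"

text \<open>Plugging without capture: K<<t>>.\<close>
definition plugnc :: "ctx \<Rightarrow> trm \<Rightarrow> trm" where
  "plugnc C t = plug C (lift (depth C) 0 t)"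

fun comp :: "ctx \<Rightarrow> ctx \<Rightarrow> ctx" where
  "comp Hole D = D"
| "comp (AppL C u) D = AppL (comp C D) u"
| "comp (AppR u C) D = AppR u (comp C D)"
| "comp (LamC C) D = LamC (comp C D)"
| "comp (SubL C u) D = SubL (comp C D) u"
| "comp (SubR u C) D = SubR u (comp C D)"

inductive is_S :: "ctx \<Rightarrow> bool" where
  "is_S Hole"
| "is_S S \<Longrightarrow> is_S (SubL S u)"

inductive is_N :: "ctx \<Rightarrow> bool" where
  "is_N Hole"
| "is_N N \<Longrightarrow> is_N (AppL N t)"
| "is_N N \<Longrightarrow> is_N (SubL N t)"

inductive is_A :: "ctx \<Rightarrow> bool" where
  "is_A Hole"
| "is_ans a \<Longrightarrow> is_A A \<Longrightarrow> is_A (SubR a A)"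
| "is_A A \<Longrightarrow> is_A (SubL A t)"

definition is_Y :: "ctx \<Rightarrow> bool" where
  "is_Y C \<longleftrightarrow> (\<exists>A N. is_A A \<and> is_N N \<and> C = comp A N)"

definition root_m :: "trm \<Rightarrow> trm \<Rightarrow> bool" where
  "root_m t u \<longleftrightarrow> (\<exists>S s w. is_S S \<and> t = App (plug S (Lam s)) w
       \<and> u = plug S (ESub s (lift (depth S) 0 w)))"

definition root_e :: "(ctx \<Rightarrow> bool) \<Rightarrow> trm \<Rightarrow> trm \<Rightarrow> bool" where
  "root_e K t u \<longleftrightarrow> (\<exists>C w. K C \<and> t = ESub (plugnc C (Var 0)) w
       \<and> u = ESub (plugnc C (lift 1 0 w)) w)"

definition root_gcv :: "trm \<Rightarrow> trm \<Rightarrow> bool" where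
  "root_gcv t u \<longleftrightarrow> (\<exists>s S v. is_S S \<and> is_val v \<and> \<not> occ 0 s
       \<and> t = ESub s (plug S v) \<and> u = plugnc S (lower 0 s))"

definition ctx_closure :: "(ctx \<Rightarrow> bool) \<Rightarrow> (trm \<Rightarrow> trm \<Rightarrow> bool) \<Rightarrow> trm \<Rightarrow> trm \<Rightarrow> bool" where
  "ctx_closure K R t u \<longleftrightarrow> (\<exists>C t' u'. K C \<and> R t' u' \<and> t = plug C t' \<and> u = plug C u')"

definition ym :: "trm \<Rightarrow> trm \<Rightarrow> bool" where "ym = ctx_closure is_Y root_m"
definition yeAY :: "trm \<Rightarrow> trm \<Rightarrow> bool" where "yeAY = ctx_closure is_A (root_e is_Y)"
definition yeYN :: "trm \<Rightarrow> trm \<Rightarrow> bool" where "yeYN = ctx_closure is_Y (root_e is_N)"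
definition ygcv :: "trm \<Rightarrow> trm \<Rightarrow> bool" where "ygcv = ctx_closure is_Y root_gcv"

definition deterministic :: "('a \<Rightarrow> 'a \<Rightarrow> bool) \<Rightarrow> bool" where
  "deterministic R \<longleftrightarrow> (\<forall>t u1 u2. R t u1 \<longrightarrow> R t u2 \<longrightarrow> u1 = u2)"

definition diamond :: "('a \<Rightarrow> 'a \<Rightarrow> bool) \<Rightarrow> bool" where
  "diamond R \<longleftrightarrow> (\<forall>t u1 u2. R t u1 \<longrightarrow> R t u2 \<longrightarrow> u1 = u2 \<or> (\<exists>s. R u1 s \<and> R u2 s))"

end

theory Submission
  imports Defs
begin

text \<open>Determinism is unique decomposition. A term has at most one decomposition
  Y<S<\<lambda>x.t> u>, and a variable occurrence has at most one silly context around it; since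
  the variable of an e-redex is bound by the substitution directly above it, the position of
  that variable (together with its de Bruijn index) fixes the whole redex.

  For gcv the only overlaps are between a root step t[x\S<v>] \<mapsto> S<t> and a step inside
  t, or inside S<v> when t is an answer. A step inside t is simply carried along by the
  erasure. A step inside S<v> cannot touch the value, so it yields some S'<v'> and only
  rewrites the context S; it can therefore be replayed on S<t>, and S'<v'> is again
  erasable. All other pairs of steps are disjoint.\<close>

section \<open>Silly contexts and unique decomposition\<close>

lemma is_S_simps [simp]:
  "is_S Hole" "is_S (SubL C t) = is_S C" "\<not> is_S (AppL C t)" "\<not> is_S (AppR t C)"
  "\<not> is_S (LamC C)" "\<not> is_S (SubR t C)"
  by (auto intro: is_S.intros elim: is_S.cases)

lemma is_N_simps [simp]:
  "is_N Hole" "is_N (SubL C t) = is_N C" "is_N (AppL C t) = is_N C" "\<not> is_N (AppR t C)"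
  "\<not> is_N (LamC C)" "\<not> is_N (SubR t C)"
  by (auto intro: is_N.intros elim: is_N.cases)

lemma is_A_simps [simp]:
  "is_A Hole" "is_A (SubL C t) = is_A C" "is_A (SubR a C) = (is_ans a \<and> is_A C)"
  "\<not> is_A (AppL C t)" "\<not> is_A (AppR t C)" "\<not> is_A (LamC C)"
  by (auto intro: is_A.intros elim: is_A.cases)

lemma is_val_iff: "is_val v \<longleftrightarrow> (\<exists>t. v = Lam t)"
  by (cases v) auto

lemma is_ans_simps [simp]:
  "is_ans (Lam t)" "\<not> is_ans (Var i)" "\<not> is_ans (App t u)"
  "is_ans (ESub a b) = (is_ans a \<and> is_ans b)"
  by (auto intro: is_ans.intros elim: is_ans.cases)

lemma plug_comp [simp]: "plug (comp C D) t = plug C (plug D t)"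
  by (induction C) auto

lemma depth_comp [simp]: "depth (comp C D) = depth C + depth D"
  by (induction C) auto

lemma is_N_imp_is_Y: "is_N C \<Longrightarrow> is_Y C"
  unfolding is_Y_def by (intro exI[of _ Hole] exI[of _ C]) simp

lemma is_Y_Hole [simp]: "is_Y Hole"
  by (simp add: is_N_imp_is_Y)

lemma is_Y_SubL [simp]: "is_Y (SubL C t) = is_Y C"
proof
  assume "is_Y (SubL C t)"
  then obtain A N where AN: "is_A A" "is_N N" "SubL C t = comp A N"
    by (auto simp: is_Y_def)
  show "is_Y C"
  proof (cases A)
    case Hole
    then show ?thesis
      using AN by (auto intro: is_N_imp_is_Y)
  qed (use AN in \<open>auto simp: is_Y_def\<close>)
next
  assume "is_Y C"
  then obtain A N where "is_A A" "is_N N" "C = comp A N"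
    by (auto simp: is_Y_def)
  then show "is_Y (SubL C t)"
    unfolding is_Y_def by (intro exI[of _ "SubL A t"] exI[of _ N]) simp
qed

lemma is_Y_SubR [simp]: "is_Y (SubR a C) = (is_ans a \<and> is_Y C)"
proof
  assume "is_Y (SubR a C)"
  then obtain A N where "is_A A" "is_N N" "SubR a C = comp A N"
    by (auto simp: is_Y_def)
  then show "is_ans a \<and> is_Y C"
    by (cases A) (auto simp: is_Y_def elim: is_N.cases)
next
  assume "is_ans a \<and> is_Y C"
  then obtain A N where "is_ans a" "is_A A" "is_N N" "C = comp A N"
    by (auto simp: is_Y_def)
  then show "is_Y (SubR a C)"
    unfolding is_Y_def by (intro exI[of _ "SubR a A"] exI[of _ N]) simp
qed

lemma is_Y_AppL [simp]: "is_Y (AppL C t) = is_N C"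
proof
  assume "is_Y (AppL C t)"
  then obtain A N where "is_A A" "is_N N" "AppL C t = comp A N"
    by (auto simp: is_Y_def)
  then show "is_N C"
    by (cases A) auto
next
  assume "is_N C"
  then show "is_Y (AppL C t)"
    by (intro is_N_imp_is_Y) simp
qed

lemma is_Y_AppR_LamC [simp]: "\<not> is_Y (AppR t C)" "\<not> is_Y (LamC C)"
proof -
  have "comp A N \<noteq> AppR t C \<and> comp A N \<noteq> LamC C" if "is_A A" "is_N N" for A N
    using that by (induction A) (cases N; auto)+
  then show "\<not> is_Y (AppR t C)" "\<not> is_Y (LamC C)"
    unfolding is_Y_def by metis+
qed

lemma is_Y_comp_A: "is_A A \<Longrightarrow> is_Y C \<Longrightarrow> is_Y (comp A C)"
  by (induction A) auto

lemma is_Y_comp_N: "is_Y C \<Longrightarrow> is_N N \<Longrightarrow> is_Y (comp C N)"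
proof (induction C)
  case Hole
  then show ?case by (simp add: is_N_imp_is_Y)
next
  case (AppL C t)
  then have "is_N (comp C N)"
    by (induction C) auto
  then show ?case by simp
qed auto

lemma is_ans_plug_Y: "is_Y C \<Longrightarrow> is_ans (plug C r) \<Longrightarrow> is_ans r"
  by (induction C) auto

lemma plug_S_Lam_inj:
  "is_S S1 \<Longrightarrow> is_S S2 \<Longrightarrow> plug S1 (Lam s1) = plug S2 (Lam s2) \<Longrightarrow> S1 = S2 \<and> s1 = s2"
  by (induction S1 arbitrary: S2) (case_tac S2; auto)+

lemma plug_S_Lam_neq_plug_N_App:
  "is_S S \<Longrightarrow> is_N N \<Longrightarrow> plug S (Lam s) \<noteq> plug N (App t u)"
  by (induction S arbitrary: N) (case_tac N; auto)+

lemma plug_Y_m_redex_inj: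
  assumes "is_Y C1" "is_Y C2" "is_S S1" "is_S S2"
    and "plug C1 (App (plug S1 (Lam s1)) w1) = plug C2 (App (plug S2 (Lam s2)) w2)"
  shows "C1 = C2 \<and> S1 = S2 \<and> s1 = s2 \<and> w1 = w2"
  using assms
proof (induction C1 arbitrary: C2)
  case Hole
  then show ?case
    by (cases C2) (auto dest: plug_S_Lam_inj plug_S_Lam_neq_plug_N_App)
next
  case (AppL C1 t)
  then show ?case
    by (cases C2) (auto simp: plug_S_Lam_neq_plug_N_App[THEN not_sym] dest: is_N_imp_is_Y)
next
  case (SubL C1 t)
  then show ?case by (cases C2) (auto dest: is_ans_plug_Y)
next
  case (SubR a C1)
  then show ?case by (cases C2) (auto dest: is_ans_plug_Y)
qed auto

lemma plug_Y_Var_inj: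
  "is_Y C1 \<Longrightarrow> is_Y C2 \<Longrightarrow> plug C1 (Var i) = plug C2 (Var j) \<Longrightarrow> C1 = C2 \<and> i = j"
proof (induction C1 arbitrary: C2)
  case Hole
  then show ?case by (cases C2) auto
next
  case (AppL C1 t)
  then show ?case by (cases C2) (auto dest: is_N_imp_is_Y)
next
  case (SubL C1 t)
  then show ?case by (cases C2) (auto dest: is_ans_plug_Y)
next
  case (SubR a C1)
  then show ?case by (cases C2) (auto dest: is_ans_plug_Y)
qed auto

lemma comp_SubL_inj:
  "comp A1 (SubL C1 w1) = comp A2 (SubL C2 w2) \<Longrightarrow> depth C1 = depth C2 \<Longrightarrow>
   A1 = A2 \<and> C1 = C2 \<and> w1 = w2"
proof (induction A1 arbitrary: A2)
  case Hole
  then show ?case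
    by (cases A2) (auto dest: arg_cong[where f = depth])
next
  case (SubL A1 t)
  then show ?case
    by (cases A2) (auto dest: arg_cong[where f = depth])
qed (case_tac A2; auto)+

lemma plugnc_Var0 [simp]: "plugnc C (Var 0) = plug C (Var (depth C))"
  by (simp add: plugnc_def)

lemma deterministic_ctx_closure_root_e:
  assumes Y: "\<And>A C w. K A \<Longrightarrow> K' C \<Longrightarrow> is_Y (comp A (SubL C w))"
  shows "deterministic (ctx_closure K (root_e K'))"
  unfolding deterministic_def
proof (intro allI impI)
  fix t u1 u2
  assume "ctx_closure K (root_e K') t u1" "ctx_closure K (root_e K') t u2"
  then obtain A1 C1 w1 A2 C2 w2 where
    ctx: "K A1" "K' C1" "K A2" "K' C2" and
    t: "t = plug A1 (ESub (plugnc C1 (Var 0)) w1)"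
       "t = plug A2 (ESub (plugnc C2 (Var 0)) w2)" and
    u: "u1 = plug A1 (ESub (plugnc C1 (lift 1 0 w1)) w1)"
       "u2 = plug A2 (ESub (plugnc C2 (lift 1 0 w2)) w2)"
    unfolding ctx_closure_def root_e_def by metis
  have "plug (comp A1 (SubL C1 w1)) (Var (depth C1)) = plug (comp A2 (SubL C2 w2)) (Var (depth C2))"
    using t by simp
  then have "comp A1 (SubL C1 w1) = comp A2 (SubL C2 w2) \<and> depth C1 = depth C2"
    using plug_Y_Var_inj[OF Y[OF ctx(1,2)] Y[OF ctx(3,4)]] by blast
  then have "A1 = A2 \<and> C1 = C2 \<and> w1 = w2"
    using comp_SubL_inj by blast
  then show "u1 = u2"
    using u by simp
qed

lemma deterministic_ym: "deterministic ym"
  unfolding deterministic_def ym_def ctx_closure_def root_m_def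
  using plug_Y_m_redex_inj by metis

lemma deterministic_yeAY: "deterministic yeAY"
  unfolding yeAY_def
  by (rule deterministic_ctx_closure_root_e) (simp add: is_Y_comp_A)

lemma deterministic_yeYN: "deterministic yeYN"
  unfolding yeYN_def
  by (rule deterministic_ctx_closure_root_e) (simp add: is_Y_comp_N)

section \<open>Shifting under contexts\<close>

fun lift_ctx :: "nat \<Rightarrow> nat \<Rightarrow> ctx \<Rightarrow> ctx" where
  "lift_ctx k c Hole = Hole"
| "lift_ctx k c (AppL C u) = AppL (lift_ctx k c C) (lift k c u)"
| "lift_ctx k c (AppR u C) = AppR (lift k c u) (lift_ctx k c C)"
| "lift_ctx k c (LamC C) = LamC (lift_ctx k (Suc c) C)"
| "lift_ctx k c (SubL C u) = SubL (lift_ctx k (Suc c) C) (lift k c u)"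
| "lift_ctx k c (SubR u C) = SubR (lift k (Suc c) u) (lift_ctx k c C)"

fun lower_ctx :: "nat \<Rightarrow> ctx \<Rightarrow> ctx" where
  "lower_ctx c Hole = Hole"
| "lower_ctx c (AppL C u) = AppL (lower_ctx c C) (lower c u)"
| "lower_ctx c (AppR u C) = AppR (lower c u) (lower_ctx c C)"
| "lower_ctx c (LamC C) = LamC (lower_ctx (Suc c) C)"
| "lower_ctx c (SubL C u) = SubL (lower_ctx (Suc c) C) (lower c u)"
| "lower_ctx c (SubR u C) = SubR (lower (Suc c) u) (lower_ctx c C)"

lemma lift_plug: "lift k c (plug C t) = plug (lift_ctx k c C) (lift k (c + depth C) t)"
  by (induction C arbitrary: c) auto

lemma lower_plug: "lower c (plug C t) = plug (lower_ctx c C) (lower (c + depth C) t)"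
  by (induction C arbitrary: c) auto

lemma depth_lift_ctx [simp]: "depth (lift_ctx k c C) = depth C"
  by (induction C arbitrary: c) auto

lemma depth_lower_ctx [simp]: "depth (lower_ctx c C) = depth C"
  by (induction C arbitrary: c) auto

lemma is_S_lift_ctx [simp]: "is_S (lift_ctx k c C) = is_S C"
  by (induction C arbitrary: c) auto

lemma is_S_lower_ctx [simp]: "is_S (lower_ctx c C) = is_S C"
  by (induction C arbitrary: c) auto

lemma is_S_comp: "is_S C \<Longrightarrow> is_S D \<Longrightarrow> is_S (comp C D)"
  by (induction C) auto

lemma is_val_lift [simp]: "is_val (lift k c v) = is_val v"
  by (cases v) auto

lemma is_val_lower [simp]: "is_val (lower c v) = is_val v"
  by (cases v) auto

lemma is_ans_lift: "is_ans a \<Longrightarrow> is_ans (lift k c a)"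
  by (induction a arbitrary: c) auto

lemma is_ans_lower: "is_ans a \<Longrightarrow> is_ans (lower c a)"
  by (induction a arbitrary: c) auto

lemma occ_lift_below: "k < c \<Longrightarrow> occ k (lift d c t) = occ k t"
  by (induction t arbitrary: k c) auto

lemma occ_lift_gap: "c \<le> k \<Longrightarrow> k < c + d \<Longrightarrow> \<not> occ k (lift d c t)"
  by (induction t arbitrary: k c) auto

lemma occ_lift_above: "c \<le> k \<Longrightarrow> occ (k + d) (lift d c t) = occ k t"
  by (induction t arbitrary: k c) (auto simp flip: add_Suc)

lemma occ_lower:
  "\<not> occ c t \<Longrightarrow> occ k (lower c t) = (if k < c then occ k t else occ (Suc k) t)"
  by (induction t arbitrary: k c) auto

lemma lift_lift_merge: "c \<le> c' \<Longrightarrow> c' \<le> c + j \<Longrightarrow> lift k c' (lift j c t) = lift (k + j) c t"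
  by (induction t arbitrary: c c') auto

lemma lift_lift_commute: "c \<le> c' \<Longrightarrow> lift k (c' + d) (lift d c t) = lift d c (lift k c' t)"
  by (induction t arbitrary: c c') (auto simp flip: add_Suc)

lemma lower_lift_below: "\<not> occ j t \<Longrightarrow> j \<le> c \<Longrightarrow> lower j (lift k (Suc c) t) = lift k c (lower j t)"
  by (induction t arbitrary: j c) auto

lemma lower_lift_above: "\<not> occ j t \<Longrightarrow> c \<le> j \<Longrightarrow> lower (j + d) (lift d c t) = lift d c (lower j t)"
  by (induction t arbitrary: c j) (auto simp flip: add_Suc)

lemma lower_lift_Suc: "lower (k + c) (lift (Suc k) c t) = lift k c t"
  by (induction t arbitrary: c) (auto simp flip: add_Suc_right)

lemma lower_lower_commute:
  "\<not> occ j t \<Longrightarrow> \<not> occ (Suc c) t \<Longrightarrow> j \<le> c \<Longrightarrow> lower j (lower (Suc c) t) = lower c (lower j t)"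
  by (induction t arbitrary: j c) auto

section \<open>Garbage collection of values\<close>

lemma plugnc_SubL: "plugnc (SubL C u) r = ESub (plugnc C (lift 1 0 r)) u"
  by (simp add: plugnc_def lift_lift_merge)

lemma occ_plug_S_ctx:
  "is_S S \<Longrightarrow> occ k (plug S r) \<Longrightarrow> \<not> occ (k + depth S) r \<Longrightarrow> occ k (plug S r')"
  by (induction S arbitrary: k) auto

lemma occ_plugnc_S: "is_S S \<Longrightarrow> occ k (plugnc S r) \<Longrightarrow> occ k r \<or> occ k (plug S r')"
  unfolding plugnc_def using occ_plug_S_ctx occ_lift_above[of 0 k "depth S" r] by force

lemma root_gcv_occ:
  assumes "root_gcv t u" "occ k u"
  shows "occ k t"
proof -
  obtain s S v where "is_S S" "\<not> occ 0 s" "t = ESub s (plug S v)" "u = plugnc S (lower 0 s)"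
    using assms(1) unfolding root_gcv_def by blast
  then show ?thesis
    using occ_plugnc_S[of S k "lower 0 s" v] occ_lower[of 0 s k] assms(2) by simp
qed

lemma plug_S_val_inj:
  "is_S S1 \<Longrightarrow> is_S S2 \<Longrightarrow> is_val v1 \<Longrightarrow> is_val v2 \<Longrightarrow> plug S1 v1 = plug S2 v2 \<Longrightarrow>
   S1 = S2 \<and> v1 = v2"
  unfolding is_val_iff using plug_S_Lam_inj by blast

lemma root_gcv_unique: "root_gcv t u1 \<Longrightarrow> root_gcv t u2 \<Longrightarrow> u1 = u2"
  unfolding root_gcv_def using plug_S_val_inj by (metis trm.inject(4))

lemma root_gcv_lift:
  assumes "root_gcv t u"
  shows "root_gcv (lift k c t) (lift k c u)"
proof -
  obtain s S v where S: "is_S S" "is_val v" "\<not> occ 0 s"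
    and t: "t = ESub s (plug S v)" and u: "u = plug S (lift (depth S) 0 (lower 0 s))"
    using assms unfolding root_gcv_def plugnc_def by blast
  let ?s = "lift k (Suc c) s" and ?S = "lift_ctx k c S"
  have "lift k c u = plug ?S (lift k (c + depth S) (lift (depth S) 0 (lower 0 s)))"
    using u by (simp add: lift_plug)
  also have "\<dots> = plug ?S (lift (depth S) 0 (lift k c (lower 0 s)))"
    using lift_lift_commute[of 0 c k "depth S"] by simp
  also have "\<dots> = plugnc ?S (lower 0 ?s)"
    using lower_lift_below[OF S(3)] by (simp add: plugnc_def)
  finally have "lift k c u = plugnc ?S (lower 0 ?s)" .
  moreover have "lift k c t = ESub ?s (plug ?S (lift k (c + depth S) v))"
    using t by (simp add: lift_plug)
  moreover have "\<not> occ 0 ?s"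
    using S(3) occ_lift_below[of 0 "Suc c"] by simp
  moreover have "is_S ?S" "is_val (lift k (c + depth S) v)"
    using S by simp_all
  ultimately show ?thesis
    unfolding root_gcv_def by blast
qed

lemma root_gcv_lower:
  assumes "root_gcv t u" "\<not> occ c t"
  shows "root_gcv (lower c t) (lower c u)"
proof -
  obtain s S v where S: "is_S S" "is_val v" "\<not> occ 0 s"
    and t: "t = ESub s (plug S v)" and u: "u = plug S (lift (depth S) 0 (lower 0 s))"
    using assms(1) unfolding root_gcv_def plugnc_def by blast
  have s: "\<not> occ (Suc c) s"
    using assms(2) t by simp
  let ?s = "lower (Suc c) s" and ?S = "lower_ctx c S"
  have "lower c u = plug ?S (lower (c + depth S) (lift (depth S) 0 (lower 0 s)))"
    using u by (simp add: lower_plug)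
  also have "\<dots> = plug ?S (lift (depth S) 0 (lower c (lower 0 s)))"
    using lower_lift_above[of c "lower 0 s" 0 "depth S"] occ_lower[OF S(3), of c] s by simp
  also have "\<dots> = plugnc ?S (lower 0 ?s)"
    using lower_lower_commute[OF S(3) s] by (simp add: plugnc_def)
  finally have "lower c u = plugnc ?S (lower 0 ?s)" .
  moreover have "lower c t = ESub ?s (plug ?S (lower (c + depth S) v))"
    using t by (simp add: lower_plug)
  moreover have "\<not> occ 0 ?s"
    using occ_lower[OF s, of 0] S(3) by simp
  moreover have "is_S ?S" "is_val (lower (c + depth S) v)"
    using S by simp_all
  ultimately show ?thesis
    unfolding root_gcv_def by blast
qed

text \<open>ctx_step R True closes R under silly contexts, ctx_step R False under name contexts,
  which are the contexts allowed in the function position of an application.\<close>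

inductive ctx_step :: "(trm \<Rightarrow> trm \<Rightarrow> bool) \<Rightarrow> bool \<Rightarrow> trm \<Rightarrow> trm \<Rightarrow> bool" for R where
  root: "R t u \<Longrightarrow> ctx_step R y t u"
| subl: "ctx_step R y t u \<Longrightarrow> ctx_step R y (ESub t w) (ESub u w)"
| subr: "is_ans a \<Longrightarrow> ctx_step R True t u \<Longrightarrow> ctx_step R True (ESub a t) (ESub a u)"
| appl: "ctx_step R False t u \<Longrightarrow> ctx_step R y (App t w) (App u w)"

lemma ctx_step_plug:
  "(if y then is_Y C else is_N C) \<Longrightarrow> R t u \<Longrightarrow> ctx_step R y (plug C t) (plug C u)"
  by (induction C arbitrary: y) (auto intro: ctx_step.intros split: if_splits)

lemma ctx_step_decomp:
  "ctx_step R y t u \<Longrightarrow>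
   \<exists>C t' u'. (if y then is_Y C else is_N C) \<and> R t' u' \<and> t = plug C t' \<and> u = plug C u'"
proof (induction rule: ctx_step.induct)
  case (root t u y)
  then show ?case by (intro exI[of _ Hole]) auto
next
  case (subl y t u w)
  then obtain C t' u' where "if y then is_Y C else is_N C" "R t' u'" "t = plug C t'" "u = plug C u'"
    by blast
  then show ?case by (intro exI[of _ "SubL C w"]) auto
next
  case (subr a t u)
  then obtain C t' u' where "is_Y C" "R t' u'" "t = plug C t'" "u = plug C u'"
    by auto
  with subr.hyps show ?case by (intro exI[of _ "SubR a C"]) auto
next
  case (appl t u y w)
  then obtain C t' u' where "is_N C" "R t' u'" "t = plug C t'" "u = plug C u'"
    by auto
  then show ?case by (intro exI[of _ "AppL C w"]) (auto intro: is_N_imp_is_Y)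
qed

lemma ygcv_eq_ctx_step: "ygcv = ctx_step root_gcv True"
  unfolding ygcv_def ctx_closure_def
  using ctx_step_plug[of True _ root_gcv] ctx_step_decomp[of root_gcv True] by (intro ext iffI) auto

lemma ctx_step_ESub_cases:
  assumes "ctx_step R y (ESub t w) u"
  obtains (root) "R (ESub t w) u"
  | (subl) t' where "u = ESub t' w" "ctx_step R y t t'"
  | (subr) w' where "y" "is_ans t" "u = ESub t w'" "ctx_step R True w w'"
  using assms by (cases rule: ctx_step.cases) auto

lemma ctx_step_App_cases:
  assumes "ctx_step R y (App t w) u"
  obtains (root) "R (App t w) u"
  | (appl) t' where "u = App t' w" "ctx_step R False t t'"
  using assms by (cases rule: ctx_step.cases) auto

lemma ctx_step_plug_S: "is_S S \<Longrightarrow> ctx_step R y t u \<Longrightarrow> ctx_step R y (plug S t) (plug S u)"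
  by (induction S) (auto intro: ctx_step.subl)

lemma ctx_step_gcv_occ: "ctx_step root_gcv y t u \<Longrightarrow> occ k u \<Longrightarrow> occ k t"
  by (induction arbitrary: k rule: ctx_step.induct) (auto dest: root_gcv_occ)

lemma ctx_step_gcv_lift: "ctx_step root_gcv y t u \<Longrightarrow> ctx_step root_gcv y (lift k c t) (lift k c u)"
  by (induction arbitrary: c rule: ctx_step.induct)
    (auto intro: ctx_step.intros root_gcv_lift is_ans_lift)

lemma ctx_step_gcv_lower:
  "ctx_step root_gcv y t u \<Longrightarrow> \<not> occ c t \<Longrightarrow> ctx_step root_gcv y (lower c t) (lower c u)"
  by (induction arbitrary: c rule: ctx_step.induct)
    (auto intro: ctx_step.intros root_gcv_lower is_ans_lower)

lemma plug_S_is_ans: "is_S S \<Longrightarrow> is_ans (plug S t) \<Longrightarrow> is_ans u \<Longrightarrow> is_ans (plug S u)"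
  by (induction S) auto

lemma root_gcv_is_ans:
  assumes "root_gcv a u" "is_ans a"
  shows "is_ans u"
proof -
  obtain s S v where "is_S S" "a = ESub s (plug S v)" "u = plugnc S (lower 0 s)"
    using assms(1) unfolding root_gcv_def by blast
  then show ?thesis
    using assms(2) plug_S_is_ans is_ans_lift is_ans_lower by (auto simp: plugnc_def)
qed

lemma ctx_step_gcv_is_ans: "ctx_step root_gcv y a u \<Longrightarrow> is_ans a \<Longrightarrow> is_ans u"
  by (induction rule: ctx_step.induct) (auto dest: root_gcv_is_ans)

lemma ctx_step_gcv_Lam: "\<not> ctx_step root_gcv y (Lam t) u"
  by (auto elim: ctx_step.cases simp: root_gcv_def)

text \<open>Erasing the substitution in S<v>[x\S2<v2>] moves S2 outside of S, whatever is
  plugged into S.\<close>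

lemma root_gcv_SubL_val:
  assumes S: "is_S S" and v: "is_val v" and root: "root_gcv (ESub (plug S v) u) x"
  shows "\<exists>S' v'. is_S S' \<and> is_val v' \<and> x = plug S' v'
    \<and> (\<forall>r. root_gcv (plugnc (SubL S u) r) (plugnc S' r))"
proof -
  obtain S2 v2 where S2: "is_S S2" "is_val v2" and free: "\<not> occ 0 (plug S v)"
    and u: "u = plug S2 v2" and x: "x = plugnc S2 (lower 0 (plug S v))"
    using root unfolding root_gcv_def by blast
  let ?L = "lift_ctx (depth S2) 0 (lower_ctx 0 S)"
  let ?S' = "comp S2 ?L" and ?v' = "lift (depth S2) (depth S) (lower (depth S) v)"
  have "x = plug ?S' ?v'"
    using x by (simp add: plugnc_def lift_plug lower_plug)
  moreover have "root_gcv (plugnc (SubL S u) r) (plugnc ?S' r)" for r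
  proof -
    let ?y = "lift (Suc (depth S)) 0 r"
    have "\<not> occ 0 (plug S ?y)"
      using occ_plug_S_ctx[OF S, of 0 ?y v] occ_lift_gap[of 0 "depth S" "Suc (depth S)" r] free
      by auto
    then have "root_gcv (ESub (plug S ?y) u) (plugnc S2 (lower 0 (plug S ?y)))"
      unfolding root_gcv_def using S2 u by blast
    moreover have "plugnc S2 (lower 0 (plug S ?y)) = plugnc ?S' r"
      using lower_lift_Suc[of "depth S" 0 r] lift_lift_merge[of 0 "depth S" "depth S" "depth S2" r]
      by (simp add: plugnc_def lift_plug lower_plug)
    ultimately show ?thesis
      by (simp add: plugnc_def)
  qed
  ultimately show ?thesis
    using S S2 v by (intro exI[of _ ?S'] exI[of _ ?v']) (simp add: is_S_comp)
qed

text \<open>Only answers r are allowed: replaying a step that lies to the right of a substitution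
  in S needs an answer on its left.\<close>

lemma ctx_step_gcv_plug_S_val:
  "is_S S \<Longrightarrow> is_val v \<Longrightarrow> ctx_step root_gcv y (plug S v) x \<Longrightarrow>
   \<exists>S' v'. is_S S' \<and> is_val v' \<and> x = plug S' v'
     \<and> (\<forall>r. is_ans r \<longrightarrow> ctx_step root_gcv y (plugnc S r) (plugnc S' r))"
proof (induction S arbitrary: x)
  case Hole
  then show ?case
    using ctx_step_gcv_Lam by (auto simp: is_val_iff)
next
  case (SubL S u)
  have S: "is_S S"
    using SubL.prems(1) by simp
  from SubL.prems(3) have "ctx_step root_gcv y (ESub (plug S v) u) x"
    by simp
  then show ?case
  proof (cases rule: ctx_step_ESub_cases)
    case root
    then obtain S' v' where "is_S S'" "is_val v'" "x = plug S' v'"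
      and "\<forall>r. root_gcv (plugnc (SubL S u) r) (plugnc S' r)"
      using root_gcv_SubL_val[OF S SubL.prems(2)] by blast
    then show ?thesis
      by (blast intro: ctx_step.root)
  next
    case (subl x')
    then obtain S' v' where "is_S S'" "is_val v'" "x' = plug S' v'"
      and steps: "\<forall>r. is_ans r \<longrightarrow> ctx_step root_gcv y (plugnc S r) (plugnc S' r)"
      using SubL.IH[OF S SubL.prems(2)] by blast
    moreover have "ctx_step root_gcv y (plugnc (SubL S u) r) (plugnc (SubL S' u) r)"
      if "is_ans r" for r
      using steps is_ans_lift[OF that] by (simp add: plugnc_SubL ctx_step.subl)
    ultimately show ?thesis
      using subl by (intro exI[of _ "SubL S' u"] exI[of _ v']) auto
  next
    case (subr u')
    have "ctx_step root_gcv y (plugnc (SubL S u) r) (plugnc (SubL S u') r)" if "is_ans r" for r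
    proof -
      have "is_ans (plugnc S (lift 1 0 r))"
        using subr by (simp add: plugnc_def plug_S_is_ans[OF S] is_ans_lift that)
      then show ?thesis
        using subr by (simp add: plugnc_SubL ctx_step.subr)
    qed
    then show ?thesis
      using S SubL.prems(2) subr by (intro exI[of _ "SubL S u'"] exI[of _ v]) auto
  qed
qed auto

lemma root_gcv_body_join:
  assumes root: "root_gcv (ESub s w) u" and step: "ctx_step root_gcv y s s'"
  shows "\<exists>z. ctx_step root_gcv y u z \<and> ctx_step root_gcv y (ESub s' w) z"
proof -
  obtain S v where S: "is_S S" "is_val v" "\<not> occ 0 s" and w: "w = plug S v"
    and u: "u = plugnc S (lower 0 s)"
    using root unfolding root_gcv_def by blast
  have "ctx_step root_gcv y u (plugnc S (lower 0 s'))"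
    unfolding u plugnc_def
    using S step by (intro ctx_step_plug_S ctx_step_gcv_lift ctx_step_gcv_lower)
  moreover have "\<not> occ 0 s'"
    using S(3) step ctx_step_gcv_occ by blast
  then have "ctx_step root_gcv y (ESub s' w) (plugnc S (lower 0 s'))"
    unfolding root_gcv_def using S w by (intro ctx_step.root) blast
  ultimately show ?thesis
    by blast
qed

lemma root_gcv_arg_join:
  assumes root: "root_gcv (ESub a w) u" and a: "is_ans a" and step: "ctx_step root_gcv y w w'"
  shows "\<exists>z. ctx_step root_gcv y u z \<and> ctx_step root_gcv y (ESub a w') z"
proof -
  obtain S v where S: "is_S S" "is_val v" "\<not> occ 0 a" and w: "w = plug S v"
    and u: "u = plugnc S (lower 0 a)"
    using root unfolding root_gcv_def by blast
  obtain S' v' where S': "is_S S'" "is_val v'" "w' = plug S' v'"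
    and steps: "\<forall>r. is_ans r \<longrightarrow> ctx_step root_gcv y (plugnc S r) (plugnc S' r)"
    using ctx_step_gcv_plug_S_val[OF S(1,2)] step w by blast
  have "ctx_step root_gcv y u (plugnc S' (lower 0 a))"
    using steps is_ans_lower[OF a] u by blast
  moreover have "ctx_step root_gcv y (ESub a w') (plugnc S' (lower 0 a))"
    unfolding root_gcv_def using S(3) S' by (intro ctx_step.root) blast
  ultimately show ?thesis
    by blast
qed

lemma root_gcv_ctx_step_join:
  assumes root: "root_gcv t u1" and step: "ctx_step root_gcv y t u2"
  shows "u1 = u2 \<or> (\<exists>z. ctx_step root_gcv y u1 z \<and> ctx_step root_gcv y u2 z)"
proof -
  obtain s w where t: "t = ESub s w"
    using root unfolding root_gcv_def by blast
  from step show ?thesis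
    unfolding t
  proof (cases rule: ctx_step_ESub_cases)
    case root
    then show ?thesis
      using assms(1) root_gcv_unique t by blast
  next
    case (subl s')
    then show ?thesis
      using root_gcv_body_join assms(1) t by blast
  next
    case (subr w')
    then have "ctx_step root_gcv y w w'"
      by simp
    then show ?thesis
      using root_gcv_arg_join assms(1) t subr by blast
  qed
qed

lemma ctx_step_gcv_ESub_parallel:
  assumes "ctx_step root_gcv True a a'" "is_ans a" "ctx_step root_gcv True w w'"
  shows "ctx_step root_gcv True (ESub a' w) (ESub a' w')"
    and "ctx_step root_gcv True (ESub a w') (ESub a' w')"
  using assms ctx_step_gcv_is_ans by (blast intro: ctx_step.subl ctx_step.subr)+

lemma ctx_step_gcv_diamond:
  "ctx_step root_gcv y t u1 \<Longrightarrow> ctx_step root_gcv y t u2 \<Longrightarrow>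
   u1 = u2 \<or> (\<exists>z. ctx_step root_gcv y u1 z \<and> ctx_step root_gcv y u2 z)"
proof (induction arbitrary: u2 rule: ctx_step.induct)
  case (root t u1 y)
  then show ?case
    using root_gcv_ctx_step_join by blast
next
  case (subl y t u1 w)
  from subl.prems show ?case
  proof (cases rule: ctx_step_ESub_cases)
    case root
    then show ?thesis
      using root_gcv_ctx_step_join[OF _ ctx_step.subl[OF subl.hyps]] by blast
  next
    case (subl t')
    then show ?thesis
      using subl.IH by (auto intro: ctx_step.subl)
  next
    case (subr w')
    with subl.hyps show ?thesis
      using ctx_step_gcv_ESub_parallel by (simp only: \<open>y\<close>) blast
  qed
next
  case (subr a t u1)
  from subr.prems show ?case
  proof (cases rule: ctx_step_ESub_cases)
    case root
    then show ?thesis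
      using root_gcv_ctx_step_join[OF _ ctx_step.subr[OF subr.hyps(1,2)]] by blast
  next
    case (subl a')
    then show ?thesis
      using ctx_step_gcv_ESub_parallel subr.hyps by blast
  next
    case (subr t')
    then show ?thesis
      using subr.IH \<open>is_ans a\<close> by (auto intro: ctx_step.subr)
  qed
next
  case (appl t u1 y w)
  from appl.prems show ?case
  proof (cases rule: ctx_step_App_cases)
    case root
    then show ?thesis
      by (simp add: root_gcv_def)
  next
    case (appl t')
    then show ?thesis
      using appl.IH by (auto intro: ctx_step.appl)
  qed
qed

lemma diamond_ygcv: "diamond ygcv"
  unfolding diamond_def ygcv_eq_ctx_step using ctx_step_gcv_diamond by blast

theorem proposition11p4:
  shows "deterministic ym \<and> deterministic yeAY \<and> deterministic yeYN \<and> diamond ygcv"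
  using deterministic_ym deterministic_yeAY deterministic_yeYN diamond_ygcv by blast

end
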